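(* For $t\ge0$ let $C_t:=\binom{2t}{t}2^t$ and for $t\ge1$ let $D_t:=\sum_{j=0}^{t-1}U(3t,j)-\sum_{j\ge t+1}U(3t,j)$. Then $\displaystyle\lim_{t\to\infty}\frac{D_t}{C_t}=\frac19$.
   Context: For integers $m,j$, $U(m,j):=\binom{m-j}{j}2^j$ if $0\le j$ and $2j\le m$, and $U(m,j):=0$ otherwise. *)

theory Defs
  imports Complex_Main
begin

definition U :: "int \<Rightarrow> int \<Rightarrow> int" where
  "U m j = (if 0 \<le> j \<and> 2 * j \<le> m then int (nat (m - j) choose nat j) * 2 ^ nat j else 0)"

definition C :: "nat \<Rightarrow> int" where
  "C t = int ((2 * t) choose t) * 2 ^ t"

text \<open>The infinite sum over j \<ge> t+1 has only finitely many nonzero terms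
 (U(3t,j) = 0 for 2j > 3t), so it is written as a finite sum over j in {t+1..3t}.\<close>
definition D :: "nat \<Rightarrow> int" where
  "D t = (\<Sum>j\<in>{0..int t - 1}. U (3 * int t) j) - (\<Sum>j\<in>{int t + 1..3 * int t}. U (3 * int t) j)"

end

theory Submission
  imports Defs
begin

(* Write D t as the balance of the row U(3t, -) around j = t: the terms left of t minus the
   terms right of t.  The Pascal-type rule U(m+2, j+1) = U(m+1, j+1) + 2 U(m, j) passes to
   balances, so the balances of rows 3t and 3t+1 at t determine those of rows 3t+3 and 3t+4
   at t+1, up to boundary terms that are rational multiples of C t.  This gives the invariant
   3 (B t + D t) = C t - U(3t+1, t) - U(3t+1, t+1), with B t the balance of row 3t+1 at t,
   and hence D (t+1) + D t = C t.  As (t+1) C (t+1) = 4 (2t+1) C t, the ratio r t = D t / C t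
   satisfies r (t+1) = (1 - r t) (t+1) / (4 (2t+1)); the factor is at most 1/4 and tends to 1/8,
   and 1/9 is the fixed point of r = (1 - r) / 8, so |r t - 1/9| <= 1 / (t+1). *)

(* No case split is needed: (m - j) choose j vanishes once 2j > m, also when m - j
   truncates to 0. *)
definition u :: "nat \<Rightarrow> nat \<Rightarrow> int" where
  "u m j = int ((m - j) choose j) * 2 ^ j"

lemma U_of_nat: "U (int m) (int j) = u m j"
  by (cases "2 * j \<le> m") (auto simp: U_def u_def binomial_eq_0 nat_diff_distrib)

lemma u_eq_0: "m < 2 * j \<Longrightarrow> u m j = 0"
  by (simp add: u_def binomial_eq_0)

lemma u_0: "u m 0 = 1"
  by (simp add: u_def)

lemma u_Suc_Suc: "u (Suc (Suc m)) (Suc j) = u (Suc m) (Suc j) + 2 * u m j"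
proof (cases "j \<le> m")
  case True
  then have "Suc (Suc m) - Suc j = Suc (m - j)" "Suc m - Suc j = m - j"
    by auto
  then show ?thesis
    by (simp add: u_def algebra_simps)
qed (simp add: u_def)

definition u_sum :: "nat \<Rightarrow> nat \<Rightarrow> int" where
  "u_sum m a = (\<Sum>j<a. u m j)"

definition u_total :: "nat \<Rightarrow> int" where
  "u_total m = u_sum m (Suc m)"

definition u_pair :: "nat \<Rightarrow> nat \<Rightarrow> int" where
  "u_pair m a = u m a + u m (Suc a)"

definition balance :: "nat \<Rightarrow> nat \<Rightarrow> int" where
  "balance m a = (\<Sum>j<a. u m j) - (\<Sum>j\<in>{a<..m}. u m j)"

lemma u_sum_Suc_Suc: "u_sum (Suc (Suc m)) (Suc a) = u_sum (Suc m) (Suc a) + 2 * u_sum m a"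
  unfolding u_sum_def sum.lessThan_Suc_shift
  by (simp add: u_0 u_Suc_Suc sum.distrib sum_distrib_left)

lemma u_sum_eq_total:
  assumes "m < a"
  shows "u_sum m a = u_total m"
proof -
  have "(\<Sum>j<a. u m j) = (\<Sum>j<Suc m. u m j)"
    by (rule sum.mono_neutral_right) (use assms in \<open>auto intro!: u_eq_0\<close>)
  then show ?thesis
    by (simp add: u_sum_def u_total_def)
qed

lemma u_total_Suc_Suc: "u_total (Suc (Suc m)) = u_total (Suc m) + 2 * u_total m"
  using u_sum_Suc_Suc[of m "Suc (Suc m)"] by (simp add: u_sum_eq_total)

lemma balance_eq: "balance m a = u_sum m a + u_sum m (Suc a) - u_total m"
proof -
  have split: "{..<Suc (max a m)} = {..<Suc a} \<union> {a<..m}"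
    by auto
  have "u_sum m (Suc (max a m)) = u_sum m (Suc a) + (\<Sum>j\<in>{a<..m}. u m j)"
    unfolding u_sum_def split by (rule sum.union_disjoint) auto
  moreover have "u_sum m (Suc (max a m)) = u_total m"
    by (simp add: u_sum_eq_total)
  ultimately show ?thesis
    by (simp add: balance_def u_sum_def)
qed

lemma balance_Suc_Suc:
  "balance (Suc (Suc m)) (Suc a) = balance (Suc m) (Suc a) + 2 * balance m a"
  using u_sum_Suc_Suc[of m a] u_sum_Suc_Suc[of m "Suc a"] u_total_Suc_Suc[of m]
  by (simp add: balance_eq)

lemma balance_Suc: "balance m (Suc a) = balance m a + u_pair m a"
  by (simp add: balance_eq u_sum_def u_pair_def)

lemma D_eq_balance: "D t = balance (3 * t) t"
proof -
  have "{0..int t - 1} = int ` {..<t}"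
    by (auto intro!: image_eqI[where x = "nat x" for x])
  moreover have "{int t + 1..3 * int t} = int ` {t<..3 * t}"
    by (auto intro!: image_eqI[where x = "nat x" for x])
  ultimately show ?thesis
    using U_of_nat[of "3 * t"] by (simp add: D_def balance_def sum.reindex)
qed

lemma central_binomial_neighbours:
  fixes t :: nat
  shows "(t + 1) * (2 * t + 1 choose (t + 1)) = (2 * t + 1) * (2 * t choose t)"
    and "(t + 1) * (2 * t + 1 choose t) = (2 * t + 1) * (2 * t choose t)"
    and "(t + 1) * (2 * t choose (t + 1)) = t * (2 * t choose t)"
    and "(t + 1) * (2 * t + 2 choose (t + 1)) = 2 * (2 * t + 1) * (2 * t choose t)"
    and "(t + 1) * (t + 2) * (2 * t + 2 choose t) = (2 * t + 1) * (2 * t + 2) * (2 * t choose t)"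
proof -
  have sym1: "2 * t + 1 choose t = 2 * t + 1 choose (t + 1)"
    using binomial_symmetric[of t "2 * t + 1"] by simp
  have sym2: "2 * t + 2 choose t = 2 * t + 2 choose (t + 2)"
    using binomial_symmetric[of t "2 * t + 2"] by simp
  show odd: "(t + 1) * (2 * t + 1 choose (t + 1)) = (2 * t + 1) * (2 * t choose t)"
    using Suc_times_binomial[of t "2 * t"] by simp
  then show "(t + 1) * (2 * t + 1 choose t) = (2 * t + 1) * (2 * t choose t)"
    using sym1 by simp
  show "(t + 1) * (2 * t choose (t + 1)) = t * (2 * t choose t)"
    using binomial_absorption[of t "2 * t"] binomial_absorb_comp[of "2 * t" t]
    by (metis Suc_eq_plus1 add_diff_cancel_left' mult_2)
  have "2 * t + 2 choose (t + 1) = 2 * (2 * t + 1 choose (t + 1))"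
    using sym1 by (simp add: numeral_eq_Suc)
  then show "(t + 1) * (2 * t + 2 choose (t + 1)) = 2 * (2 * t + 1) * (2 * t choose t)"
    using odd by (simp del: binomial_Suc_Suc add: ac_simps)
  have "(t + 2) * (2 * t + 2 choose (t + 2)) = (2 * t + 2) * (2 * t + 1 choose (t + 1))"
    using Suc_times_binomial[of "t + 1" "2 * t + 1"] by (simp add: numeral_eq_Suc)
  then show "(t + 1) * (t + 2) * (2 * t + 2 choose t) = (2 * t + 1) * (2 * t + 2) * (2 * t choose t)"
    unfolding sym2 using odd by (smt (verit) mult.assoc mult.left_commute)
qed

lemma C_Suc: "(int t + 1) * C (Suc t) = 4 * (2 * int t + 1) * C t"
proof -
  have shift: "(int t + 1) * int (2 * t + 2 choose (t + 1))
      = 2 * (2 * int t + 1) * int (2 * t choose t)"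
    using arg_cong[OF central_binomial_neighbours(4)[of t], of int]
    by (simp add: algebra_simps del: binomial_Suc_Suc)
  have "(int t + 1) * C (Suc t) = 2 * 2 ^ t * ((int t + 1) * int (2 * t + 2 choose (t + 1)))"
    by (simp add: C_def algebra_simps del: binomial_Suc_Suc)
  also have "\<dots> = 4 * (2 * int t + 1) * C t"
    unfolding shift by (simp add: C_def)
  finally show ?thesis .
qed

lemma u_pair_diagonal_1: "(int t + 1) * u_pair (3 * t + 1) t = (4 * int t + 1) * C t"
proof -
  have shift1: "(int t + 1) * int (2 * t + 1 choose t) = (2 * int t + 1) * int (2 * t choose t)"
    using arg_cong[OF central_binomial_neighbours(2)[of t], of int]
    by (simp add: algebra_simps del: binomial_Suc_Suc)
  have shift2: "(int t + 1) * int (2 * t choose (t + 1)) = int t * int (2 * t choose t)"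
    using arg_cong[OF central_binomial_neighbours(3)[of t], of int]
    by (simp add: algebra_simps del: binomial_Suc_Suc)
  have "3 * t + 1 - t = 2 * t + 1" "3 * t + 1 - Suc t = 2 * t"
    by simp_all
  then have "(int t + 1) * u_pair (3 * t + 1) t
      = 2 ^ t * ((int t + 1) * int (2 * t + 1 choose t)
          + 2 * ((int t + 1) * int (2 * t choose (t + 1))))"
    by (simp add: u_pair_def u_def algebra_simps del: binomial_Suc_Suc)
  also have "\<dots> = (4 * int t + 1) * C t"
    unfolding shift1 shift2 by (simp add: C_def algebra_simps)
  finally show ?thesis .
qed

lemma u_pair_diagonal_2:
  "(int t + 1) * (int t + 2) * u_pair (3 * t + 2) t = 2 * (2 * int t + 1) * (2 * int t + 3) * C t"
proof -
  have shift1: "(int t + 1) * (int t + 2) * int (2 * t + 2 choose t)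
      = (2 * int t + 1) * (2 * int t + 2) * int (2 * t choose t)"
    using arg_cong[OF central_binomial_neighbours(5)[of t], of int]
    by (simp add: algebra_simps del: binomial_Suc_Suc)
  have shift2: "(int t + 1) * int (2 * t + 1 choose (t + 1)) = (2 * int t + 1) * int (2 * t choose t)"
    using arg_cong[OF central_binomial_neighbours(1)[of t], of int]
    by (simp add: algebra_simps del: binomial_Suc_Suc)
  have "3 * t + 2 - t = 2 * t + 2" "3 * t + 2 - Suc t = 2 * t + 1"
    by simp_all
  then have "(int t + 1) * (int t + 2) * u_pair (3 * t + 2) t
      = 2 ^ t * ((int t + 1) * (int t + 2) * int (2 * t + 2 choose t)
          + 2 * (int t + 2) * ((int t + 1) * int (2 * t + 1 choose (t + 1))))"
    by (simp add: u_pair_def u_def algebra_simps del: binomial_Suc_Suc)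
  also have "\<dots> = 2 * (2 * int t + 1) * (2 * int t + 3) * C t"
    unfolding shift1 shift2 by (simp add: C_def algebra_simps)
  finally show ?thesis .
qed

(* Both u_pair terms are rational multiples of C t, so after clearing the denominator
   (t+1) (t+2) the identity is polynomial in t. *)
lemma C_Suc_minus_u_pair:
  "C (Suc t) - u_pair (3 * Suc t + 1) (Suc t)
    = 8 * C t + 4 * u_pair (3 * t + 1) t - 6 * u_pair (3 * t + 2) t"
proof -
  let ?a = "int t"
  have p': "(?a + 2) * u_pair (3 * Suc t + 1) (Suc t) = (4 * ?a + 5) * C (Suc t)"
    using u_pair_diagonal_1[of "Suc t"] by (simp add: algebra_simps)
  have "(?a + 1) * (?a + 2) * (C (Suc t) - u_pair (3 * Suc t + 1) (Suc t))
      = (?a + 1) * ((?a + 2) * C (Suc t) - (?a + 2) * u_pair (3 * Suc t + 1) (Suc t))"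
    by (simp add: algebra_simps)
  also have "\<dots> = -3 * (?a + 1) * ((?a + 1) * C (Suc t))"
    unfolding p' by (simp add: algebra_simps)
  also have "\<dots> = -12 * (?a + 1) * (2 * ?a + 1) * C t"
    unfolding C_Suc by (simp add: algebra_simps)
  also have "\<dots> = 8 * (?a + 1) * (?a + 2) * C t + 4 * (?a + 2) * ((?a + 1) * u_pair (3 * t + 1) t)
      - 6 * ((?a + 1) * (?a + 2) * u_pair (3 * t + 2) t)"
    unfolding u_pair_diagonal_1 u_pair_diagonal_2 by (simp add: algebra_simps)
  also have "\<dots>
      = (?a + 1) * (?a + 2) * (8 * C t + 4 * u_pair (3 * t + 1) t - 6 * u_pair (3 * t + 2) t)"
    by (simp add: algebra_simps)
  finally show ?thesis
    by simp
qed

lemma balance_diagonal_Suc: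
  shows "balance (3 * Suc t) (Suc t)
      = 3 * balance (3 * t + 1) t + 2 * balance (3 * t) t + u_pair (3 * t + 1) t"
    and "balance (3 * Suc t + 1) (Suc t)
      = 5 * balance (3 * t + 1) t + 6 * balance (3 * t) t
        + 3 * u_pair (3 * t + 1) t - 2 * u_pair (3 * t + 2) t"
proof -
  have row2: "balance (3 * t + 2) (Suc t) = balance (3 * t + 1) (Suc t) + 2 * balance (3 * t) t"
    using balance_Suc_Suc[of "3 * t" t] by (simp add: numeral_eq_Suc)
  have row3: "balance (3 * Suc t) (Suc t) = balance (3 * t + 2) (Suc t) + 2 * balance (3 * t + 1) t"
    using balance_Suc_Suc[of "3 * t + 1" t] by (simp add: numeral_eq_Suc)
  have row4: "balance (3 * Suc t + 1) (Suc t) = balance (3 * Suc t) (Suc t) + 2 * balance (3 * t + 2) t"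
    using balance_Suc_Suc[of "3 * t + 2" t] by (simp add: numeral_eq_Suc)
  note shift1 = balance_Suc[of "3 * t + 1" t] and shift2 = balance_Suc[of "3 * t + 2" t]
  show "balance (3 * Suc t) (Suc t)
      = 3 * balance (3 * t + 1) t + 2 * balance (3 * t) t + u_pair (3 * t + 1) t"
    using shift1 row2 row3 by simp
  show "balance (3 * Suc t + 1) (Suc t)
      = 5 * balance (3 * t + 1) t + 6 * balance (3 * t) t
        + 3 * u_pair (3 * t + 1) t - 2 * u_pair (3 * t + 2) t"
    using shift1 shift2 row2 row3 row4 by simp
qed

lemma balance_diagonal_invariant:
  "3 * (balance (3 * t + 1) t + balance (3 * t) t) = C t - u_pair (3 * t + 1) t"
proof (induction t)
  case 0
  show ?case
    by (simp add: balance_eq u_sum_def u_total_def u_pair_def C_def u_def)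
next
  case (Suc t)
  have "3 * (balance (3 * Suc t + 1) (Suc t) + balance (3 * Suc t) (Suc t))
      = 8 * (3 * (balance (3 * t + 1) t + balance (3 * t) t))
        + 12 * u_pair (3 * t + 1) t - 6 * u_pair (3 * t + 2) t"
    unfolding balance_diagonal_Suc by simp
  also have "\<dots> = C (Suc t) - u_pair (3 * Suc t + 1) (Suc t)"
    unfolding Suc.IH C_Suc_minus_u_pair by simp
  finally show ?case .
qed

lemma D_Suc_add: "D (Suc t) + D t = C t"
  using balance_diagonal_Suc(1)[of t] balance_diagonal_invariant[of t]
  by (simp add: D_eq_balance)

definition ratio :: "nat \<Rightarrow> real" where
  "ratio t = real_of_int (D t) / real_of_int (C t)"

lemma C_pos: "0 < C t"
  by (simp add: C_def)

lemma ratio_Suc: "ratio (Suc t) = (1 - ratio t) * ((real t + 1) / (4 * (2 * real t + 1)))"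
proof -
  have C': "real_of_int (C (Suc t)) = 4 * (2 * real t + 1) * real_of_int (C t) / (real t + 1)"
    using arg_cong[OF C_Suc[of t], of real_of_int] by (simp add: field_simps)
  have D': "real_of_int (D (Suc t)) = real_of_int (C t) - real_of_int (D t)"
    using arg_cong[OF D_Suc_add[of t], of real_of_int] by simp
  show ?thesis
    unfolding ratio_def C' D' using C_pos[of t] by (simp add: field_simps)
qed

lemma ratio_error_bound: "\<bar>ratio t - 1/9\<bar> \<le> inverse (real (Suc t))"
proof (induction t)
  case 0
  show ?case
    by (simp add: ratio_def D_def)
next
  case (Suc t)
  define \<rho> where "\<rho> = (real t + 1) / (4 * (2 * real t + 1))"
  have pos: "0 < 2 * real t + 1"
    by simp
  have \<rho>_nonneg: "0 \<le> \<rho>"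
    by (simp add: \<rho>_def)
  have "8/9 * \<rho> - 1/9 = 1 / (9 * (2 * real t + 1))"
    using pos by (simp add: \<rho>_def field_simps)
  moreover have "ratio (Suc t) - 1/9 = - \<rho> * (ratio t - 1/9) + (8/9 * \<rho> - 1/9)"
    unfolding ratio_Suc \<rho>_def[symmetric] by (simp add: algebra_simps)
  ultimately have "ratio (Suc t) - 1/9 = - \<rho> * (ratio t - 1/9) + 1 / (9 * (2 * real t + 1))"
    by simp
  then have "\<bar>ratio (Suc t) - 1/9\<bar> \<le> \<rho> * \<bar>ratio t - 1/9\<bar> + 1 / (9 * (2 * real t + 1))"
    using abs_triangle_ineq[of "- \<rho> * (ratio t - 1/9)" "1 / (9 * (2 * real t + 1))"] \<rho>_nonneg
    by (simp add: abs_mult)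
  also have "\<dots> \<le> \<rho> * inverse (real (Suc t)) + 1 / (9 * (2 * real t + 1))"
    using mult_left_mono[OF Suc.IH \<rho>_nonneg] by simp
  also have "\<dots> = 1 / (4 * (2 * real t + 1)) + 1 / (9 * (2 * real t + 1))"
    by (simp add: \<rho>_def field_simps)
  also have "\<dots> = 13 / (36 * (2 * real t + 1))"
    using pos by (simp add: divide_simps) (simp add: algebra_simps)
  also have "\<dots> \<le> inverse (real (Suc (Suc t)))"
    by (simp add: field_simps)
  finally show ?case .
qed

theorem mainTheorem15:
  shows "(\<lambda>t. real_of_int (D t) / real_of_int (C t)) \<longlonglongrightarrow> 1 / 9"
proof -
  have "\<forall>\<^sub>F t in sequentially. 1/9 + - inverse (real (Suc t)) \<le> ratio t"
    and "\<forall>\<^sub>F t in sequentially. ratio t \<le> 1/9 + inverse (real (Suc t))"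
    using ratio_error_bound by (simp_all add: abs_le_iff algebra_simps)
  then have "ratio \<longlonglongrightarrow> 1/9"
    by (rule tendsto_sandwich[OF _ _ LIMSEQ_inverse_real_of_nat_add_minus
          LIMSEQ_inverse_real_of_nat_add])
  then show ?thesis
    unfolding ratio_def .
qed

end
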